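(* Let $\sigma$ be the involution of $\operatorname{Hilb}^m(S_\tau)$ induced by $(u,v,z)\mapsto(u,-v,z)$ on $S_\tau$. Then the Lagrangians $\mathcal{K}=\Sigma_{\alpha_1}\times\dots\times\Sigma_{\alpha_m}$ and $\mathcal{K}'=\Sigma_{\beta_1}\times\dots\times\Sigma_{\beta_m}$ in $\mathcal{Y}_{m,\tau}\subset\operatorname{Hilb}^m(S_\tau)$ are mapped into themselves by $\sigma$, and the fixed point sets of $\sigma|_{\mathcal{K}}$ and $\sigma|_{\mathcal{K}'}$ are the tori $\mathbb{T}_{\hat\alpha}=\hat\alpha_1\times\dots\times\hat\alpha_m$ and $\mathbb{T}_{\hat\beta}=\hat\beta_1\times\dots\times\hat\beta_m$, respectively, which lie in $\operatorname{Sym}^m(\hat S_\tau)\setminus\nabla$.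
   Context: $\tau$ is a set of $2m$ distinct complex numbers with sum $0$, $P_\tau(z)=\prod_{\mu\in\tau}(z-\mu)$, $S_\tau=\{u^2+v^2+P_\tau(z)=0\}\subset\mathbb{C}^3$, $\hat S_\tau=\{(u,z)\in\mathbb{C}^2:u^2+P_\tau(z)=0\}$ (the fixed curve of $(u,v,z)\mapsto(u,-v,z)$), and $\operatorname{Sym}^m(\hat S_\tau)=\operatorname{Hilb}^m(\hat S_\tau)\subset\operatorname{Hilb}^m(S_\tau)$. $\nabla\subset\operatorname{Sym}^m(\hat S_\tau)$ is the anti-diagonal: unordered tuples $\{(u_k,z_k)\}$ with $(u_i,z_i)=(-u_j,z_j)$ for some $i\ne j$. $\alpha_1,\dots,\alpha_m$ and $\beta_1,\dots,\beta_m$ are two crossingless matchings of $\tau$ (each a family of $m$ pairwise disjoint embedded arcs joining the points of $\tau$ in pairs). For an arc $\delta$, $\Sigma_\delta=\{(u,v,z)\in S_\tau: z\in\delta,\ u,v\in\sqrt{-P_\tau(z)}\,\mathbb{R}\}$ and $\hat\delta=\{(u,z)\in\mathbb{C}^2: z\in\delta,\ u=\pm\sqrt{-P_\tau(z)}\}\subset\hat S_\tau$, a simple closed curve. $\mathcal{Y}_{m,\tau}$ is the variety of quadruples of polynomials $(A,B,C,D)$ ($A,D$ monic of degree $m$ with opposite subleading coefficients, $\deg B,\deg C\le m-1$) with $AD-BC=P_\tau$, embedded openly in $\operatorname{Hilb}^m(S_\tau)$ by $(A,B,C,D)\mapsto\{Q: A(t)\mid Q(\frac{B+C}2(t),\frac{B-C}{2i}(t),t)\}$;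 the products $\mathcal{K},\mathcal{K}'$ lie in the part of it identified (via Hilbert–Chow) with unordered $m$-tuples of points of $S_\tau$ with distinct $z$-coordinates. *)

theory Defs
  imports "HOL-Analysis.Analysis" "HOL-Library.Multiset"
begin

type_synonym pt3 = "complex \<times> complex \<times> complex"
type_synonym pt2 = "complex \<times> complex"

definition Ptau :: "complex set \<Rightarrow> complex \<Rightarrow> complex" where
  "Ptau \<tau> z = (\<Prod>\<mu>\<in>\<tau>. z - \<mu>)"

definition S_tau :: "complex set \<Rightarrow> pt3 set" where
  "S_tau \<tau> = {(u,v,z). u\<^sup>2 + v\<^sup>2 + Ptau \<tau> z = 0}"

definition Shat_tau :: "complex set \<Rightarrow> pt2 set" where
  "Shat_tau \<tau> = {(u,z). u\<^sup>2 + Ptau \<tau> z = 0}"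

definition crossingless_matching ::
  "complex set \<Rightarrow> nat \<Rightarrow> (nat \<Rightarrow> real \<Rightarrow> complex) \<Rightarrow> bool" where
  "crossingless_matching \<tau> m \<alpha> \<longleftrightarrow>
     (\<forall>i<m. arc (\<alpha> i) \<and> pathstart (\<alpha> i) \<in> \<tau> \<and> pathfinish (\<alpha> i) \<in> \<tau>) \<and>
     (\<forall>i<m. \<forall>j<m. i \<noteq> j \<longrightarrow> path_image (\<alpha> i) \<inter> path_image (\<alpha> j) = {}) \<and>
     \<tau> = (\<Union>i<m. {pathstart (\<alpha> i), pathfinish (\<alpha> i)})"

definition Sigma_arc :: "complex set \<Rightarrow> (real \<Rightarrow> complex) \<Rightarrow> pt3 set" where
  "Sigma_arc \<tau> \<delta> = {(u,v,z). (u,v,z) \<in> S_tau \<tau> \<and> z \<in> path_image \<delta> \<and>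
      (\<exists>c r s. c\<^sup>2 = - Ptau \<tau> z \<and> u = c * of_real r \<and> v = c * of_real s)}"

definition hat_arc :: "complex set \<Rightarrow> (real \<Rightarrow> complex) \<Rightarrow> pt2 set" where
  "hat_arc \<tau> \<delta> = {(u,z). z \<in> path_image \<delta> \<and> u\<^sup>2 = - Ptau \<tau> z}"

text \<open>Points of Hilb^m(S_tau) in the locus of m points with distinct z-coordinates,
  represented as the finite set of those points.\<close>
definition distinct_z_locus :: "complex set \<Rightarrow> nat \<Rightarrow> pt3 set set" where
  "distinct_z_locus \<tau> m = {X. finite X \<and> card X = m \<and> X \<subseteq> S_tau \<tau> \<and>
      inj_on (\<lambda>(u,v,z). z) X}"

text \<open>Product Lagrangian Sigma_{delta_1} x ... x Sigma_{delta_m} (as unordered tuples).\<close>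
definition prod_Sigma :: "complex set \<Rightarrow> nat \<Rightarrow> (nat \<Rightarrow> real \<Rightarrow> complex) \<Rightarrow> pt3 set set" where
  "prod_Sigma \<tau> m \<delta> = {p ` {..<m} | p. \<forall>i<m. p i \<in> Sigma_arc \<tau> (\<delta> i)}"

definition sigma_inv :: "pt3 set \<Rightarrow> pt3 set" where
  "sigma_inv X = (\<lambda>(u,v,z). (u, -v, z)) ` X"

definition Sym_Shat :: "complex set \<Rightarrow> nat \<Rightarrow> pt2 multiset set" where
  "Sym_Shat \<tau> m = {M. size M = m \<and> set_mset M \<subseteq> Shat_tau \<tau>}"

definition antidiag :: "nat \<Rightarrow> pt2 multiset set" where
  "antidiag m = {M. size M = m \<and> (\<exists>u z. {#(u,z), (-u,z)#} \<subseteq># M)}"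

definition torus_hat :: "complex set \<Rightarrow> nat \<Rightarrow> (nat \<Rightarrow> real \<Rightarrow> complex) \<Rightarrow> pt2 multiset set" where
  "torus_hat \<tau> m \<delta> = {mset (map q [0..<m]) | q. \<forall>i<m. q i \<in> hat_arc \<tau> (\<delta> i)}"

text \<open>Inclusion of (reduced points of) Sym^m(hat S) into Hilb^m(S): (u,z) -> (u,0,z).\<close>
definition sym_to_hilb :: "pt2 multiset \<Rightarrow> pt3 set" where
  "sym_to_hilb M = (\<lambda>(u,z). (u, 0, z)) ` set_mset M"

end

theory Submission
  imports Defs
begin

text \<open>Everything rests on the arcs of a crossingless matching being pairwise disjoint. The points of an m-tuple on
  \<open>\<Sigma>\<^sub>\<alpha>\<^sub>1 \<times> \<dots> \<times> \<Sigma>\<^sub>\<alpha>\<^sub>m\<close> have their z-coordinates on different arcs, hence distinct.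
  The reflection \<open>v \<mapsto> -v\<close> preserves each \<open>\<Sigma>\<^sub>\<delta>\<close> (replace s by -s) and the z-coordinate of
  each point, so a fixed tuple must fix each of its points, i.e. all \<open>v = 0\<close>; and
  \<open>(u,0,z) \<in> \<Sigma>\<^sub>\<delta>\<close> says exactly that \<open>(u,z)\<close> lies on hat-\<open>\<delta>\<close>. Two antipodal points
  \<open>(\<pm>u,z)\<close> of the torus would share a z-coordinate, so the torus misses the anti-diagonal.\<close>

definition reflect_v :: "pt3 \<Rightarrow> pt3" where
  "reflect_v = (\<lambda>(u,v,z). (u, -v, z))"

lemma sigma_inv_eq_image: "sigma_inv X = reflect_v ` X"
  by (simp add: sigma_inv_def reflect_v_def)

lemma reflect_v_eq_self_iff: "reflect_v (u,v,z) = (u,v,z) \<longleftrightarrow> v = 0"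
  by (simp add: reflect_v_def)

lemma Sigma_arc_reflect_v:
  assumes "x \<in> Sigma_arc \<tau> \<delta>"
  shows "reflect_v x \<in> Sigma_arc \<tau> \<delta>"
proof -
  obtain u v z c r s where x: "x = (u,v,z)" "(u,v,z) \<in> S_tau \<tau>" "z \<in> path_image \<delta>"
    "c\<^sup>2 = - Ptau \<tau> z" "u = c * of_real r" "v = c * of_real s"
    using assms unfolding Sigma_arc_def by blast
  have "(u,-v,z) \<in> S_tau \<tau>"
    using x(2) by (simp add: S_tau_def)
  moreover have "-v = c * of_real (-s)"
    using x(6) by simp
  ultimately have "(u,-v,z) \<in> Sigma_arc \<tau> \<delta>"
    unfolding Sigma_arc_def using x(3-5) by blast
  then show ?thesis
    by (simp add: x(1) reflect_v_def)
qed

lemma Sigma_arc_v_zero_iff: "(u,0,z) \<in> Sigma_arc \<tau> \<delta> \<longleftrightarrow> (u,z) \<in> hat_arc \<tau> \<delta>"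
proof
  assume "(u,0,z) \<in> Sigma_arc \<tau> \<delta>"
  then show "(u,z) \<in> hat_arc \<tau> \<delta>"
    by (auto simp: Sigma_arc_def S_tau_def hat_arc_def eq_neg_iff_add_eq_0)
next
  assume hat: "(u,z) \<in> hat_arc \<tau> \<delta>"
  have "u = u * of_real 1" "0 = u * of_real 0"
    by simp_all
  with hat show "(u,0,z) \<in> Sigma_arc \<tau> \<delta>"
    unfolding Sigma_arc_def S_tau_def hat_arc_def by fastforce
qed

lemma hat_arc_subset_Shat_tau: "hat_arc \<tau> \<delta> \<subseteq> Shat_tau \<tau>"
  by (auto simp: hat_arc_def Shat_tau_def eq_neg_iff_add_eq_0)

lemma antipodal_pair_in_distinct_list:
  fixes u :: "'a::group_add"
  assumes "{#(u,z), (-u,z)#} \<subseteq># mset xs" and "distinct xs"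
  shows "(u,z) \<in> set xs \<and> (-u,z) \<in> set xs \<and> u \<noteq> 0"
proof -
  have "u \<noteq> 0"
  proof
    assume "u = 0"
    then have "count {#(u,z), (-u,z)#} (u,z) = 2"
      by simp
    then have "2 \<le> count (mset xs) (u,z)"
      using assms(1) by (metis mset_subset_eq_count)
    with assms(2) show False
      by (simp add: distinct_count_atmost_1 split: if_splits)
  qed
  with assms(1) show ?thesis
    by (auto dest: mset_subset_eqD)
qed

locale disjoint_arcs =
  fixes m :: nat and \<delta> :: "nat \<Rightarrow> real \<Rightarrow> complex"
  assumes disjoint: "disjoint_family_on (\<lambda>i. path_image (\<delta> i)) {..<m}"
begin

lemma inj_on_if_in_arcs:
  assumes "\<And>i. i < m \<Longrightarrow> f i \<in> path_image (\<delta> i)"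
  shows "inj_on f {..<m}"
proof (rule inj_onI)
  fix i j assume "i \<in> {..<m}" "j \<in> {..<m}" "f i = f j"
  then show "i = j"
    using assms disjoint unfolding disjoint_family_on_def by (metis IntI empty_iff lessThan_iff)
qed

lemma inj_on_z_coord_Sigma_tuple:
  assumes "\<forall>i<m. p i \<in> Sigma_arc \<tau> (\<delta> i)"
  shows "inj_on ((\<lambda>(u,v,z). z) \<circ> p) {..<m}"
  by (rule inj_on_if_in_arcs) (use assms in \<open>auto simp: Sigma_arc_def\<close>)

lemma prod_Sigma_subset_distinct_z_locus: "prod_Sigma \<tau> m \<delta> \<subseteq> distinct_z_locus \<tau> m"
proof
  fix X assume "X \<in> prod_Sigma \<tau> m \<delta>"
  then obtain p where X: "X = p ` {..<m}" and p: "\<forall>i<m. p i \<in> Sigma_arc \<tau> (\<delta> i)"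
    unfolding prod_Sigma_def by blast
  have inj: "inj_on ((\<lambda>(u,v,z). z) \<circ> p) {..<m}"
    using p by (rule inj_on_z_coord_Sigma_tuple)
  have "card X = m"
    using inj_on_imageI2[OF inj] by (simp add: X card_image)
  moreover have "X \<subseteq> S_tau \<tau>"
    using X p by (auto simp: Sigma_arc_def)
  ultimately show "X \<in> distinct_z_locus \<tau> m"
    using inj_on_imageI[OF inj] by (simp add: X distinct_z_locus_def)
qed

lemma sigma_inv_prod_Sigma_subset: "sigma_inv ` prod_Sigma \<tau> m \<delta> \<subseteq> prod_Sigma \<tau> m \<delta>"
proof
  fix Y assume "Y \<in> sigma_inv ` prod_Sigma \<tau> m \<delta>"
  then obtain p where "Y = reflect_v ` p ` {..<m}" and p: "\<forall>i<m. p i \<in> Sigma_arc \<tau> (\<delta> i)"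
    unfolding prod_Sigma_def sigma_inv_eq_image by blast
  then have "Y = (reflect_v \<circ> p) ` {..<m}"
    by (simp add: image_comp)
  moreover have "\<forall>i<m. (reflect_v \<circ> p) i \<in> Sigma_arc \<tau> (\<delta> i)"
    using p Sigma_arc_reflect_v by simp
  ultimately show "Y \<in> prod_Sigma \<tau> m \<delta>"
    unfolding prod_Sigma_def by blast
qed

lemma sigma_inv_fixed_tuple_v_zero:
  assumes p: "\<forall>i<m. p i \<in> Sigma_arc \<tau> (\<delta> i)"
    and fixed: "sigma_inv (p ` {..<m}) = p ` {..<m}" and "i < m" and "p i = (u,v,z)"
  shows "v = 0"
proof -
  obtain j where j: "j < m" "reflect_v (p i) = p j"
    using fixed \<open>i < m\<close> unfolding sigma_inv_eq_image by blast
  have "p j = (u,-v,z)"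
    using j(2) \<open>p i = (u,v,z)\<close> by (simp add: reflect_v_def)
  then have "((\<lambda>(u,v,z). z) \<circ> p) j = ((\<lambda>(u,v,z). z) \<circ> p) i"
    using \<open>p i = (u,v,z)\<close> by simp
  then have "j = i"
    using inj_onD[OF inj_on_z_coord_Sigma_tuple[OF p]] j(1) \<open>i < m\<close> by blast
  then show "v = 0"
    using j(2) \<open>p i = (u,v,z)\<close> reflect_v_eq_self_iff by simp
qed

lemma sigma_inv_fixed_points_prod_Sigma:
  "{X \<in> prod_Sigma \<tau> m \<delta>. sigma_inv X = X} = sym_to_hilb ` torus_hat \<tau> m \<delta>"
proof (intro equalityI subsetI)
  fix X assume "X \<in> {X \<in> prod_Sigma \<tau> m \<delta>. sigma_inv X = X}"
  then obtain p where X: "X = p ` {..<m}" and p: "\<forall>i<m. p i \<in> Sigma_arc \<tau> (\<delta> i)"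
    and fixed: "sigma_inv X = X"
    unfolding prod_Sigma_def by blast
  define q where "q i = (fst (p i), snd (snd (p i)))" for i
  have p_eq: "p i = (fst (q i), 0, snd (q i))" if "i < m" for i
    using sigma_inv_fixed_tuple_v_zero[OF p fixed[unfolded X] that]
    by (cases "p i") (auto simp: q_def)
  have "\<forall>i<m. q i \<in> hat_arc \<tau> (\<delta> i)"
    using p p_eq Sigma_arc_v_zero_iff by (metis prod.collapse)
  moreover have "X = sym_to_hilb (mset (map q [0..<m]))"
    unfolding X sym_to_hilb_def using p_eq
    by (auto simp: atLeast0LessThan image_image case_prod_beta intro!: image_cong)
  ultimately show "X \<in> sym_to_hilb ` torus_hat \<tau> m \<delta>"
    unfolding torus_hat_def by blast
next
  fix X assume "X \<in> sym_to_hilb ` torus_hat \<tau> m \<delta>"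
  then obtain q where X: "X = sym_to_hilb (mset (map q [0..<m]))"
    and q: "\<forall>i<m. q i \<in> hat_arc \<tau> (\<delta> i)"
    unfolding torus_hat_def by blast
  define p where "p i = (fst (q i), 0 :: complex, snd (q i))" for i
  have X_eq: "X = p ` {..<m}"
    unfolding X sym_to_hilb_def by (simp add: atLeast0LessThan image_image p_def case_prod_beta)
  have "\<forall>i<m. p i \<in> Sigma_arc \<tau> (\<delta> i)"
    using q Sigma_arc_v_zero_iff by (simp add: p_def)
  moreover have "sigma_inv X = X"
    unfolding sigma_inv_eq_image X_eq by (auto simp: image_image p_def reflect_v_def)
  ultimately show "X \<in> {X \<in> prod_Sigma \<tau> m \<delta>. sigma_inv X = X}"
    using X_eq unfolding prod_Sigma_def by blast
qed

lemma torus_hat_subset_Sym_Shat_minus_antidiag: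
  "torus_hat \<tau> m \<delta> \<subseteq> Sym_Shat \<tau> m - antidiag m"
proof
  fix M assume "M \<in> torus_hat \<tau> m \<delta>"
  then obtain q where M: "M = mset (map q [0..<m])" and q: "\<forall>i<m. q i \<in> hat_arc \<tau> (\<delta> i)"
    unfolding torus_hat_def by blast
  have inj: "inj_on (snd \<circ> q) {..<m}"
    by (rule inj_on_if_in_arcs) (use q in \<open>auto simp: hat_arc_def\<close>)
  have "M \<in> Sym_Shat \<tau> m"
    using M q hat_arc_subset_Shat_tau by (force simp: Sym_Shat_def)
  moreover have "M \<notin> antidiag m"
  proof
    assume "M \<in> antidiag m"
    then obtain u z where sub: "{#(u,z), (-u,z)#} \<subseteq># mset (map q [0..<m])"
      unfolding antidiag_def M by blast
    have "distinct (map q [0..<m])"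
      using inj_on_imageI2[OF inj] by (simp add: distinct_map atLeast0LessThan)
    then obtain i j where ij: "i < m" "j < m" "q i = (u,z)" "q j = (-u,z)" and "u \<noteq> 0"
      using antipodal_pair_in_distinct_list[OF sub] by auto
    then have "i = j"
      using inj_onD[OF inj, of i j] by simp
    with ij \<open>u \<noteq> 0\<close> show False
      by simp
  qed
  ultimately show "M \<in> Sym_Shat \<tau> m - antidiag m"
    by simp
qed

end

lemma crossingless_matching_imp_disjoint_arcs:
  "crossingless_matching \<tau> m \<alpha> \<Longrightarrow> disjoint_arcs m \<alpha>"
  unfolding crossingless_matching_def disjoint_arcs_def disjoint_family_on_def by blast

theorem proposition7p2:
  fixes \<tau> :: "complex set" and m :: nat and \<alpha> \<beta> :: "nat \<Rightarrow> real \<Rightarrow> complex"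
  assumes "finite \<tau>" and "card \<tau> = 2 * m" and "\<Sum>\<tau> = 0"
    and "crossingless_matching \<tau> m \<alpha>" and "crossingless_matching \<tau> m \<beta>"
  shows "prod_Sigma \<tau> m \<alpha> \<subseteq> distinct_z_locus \<tau> m \<and> prod_Sigma \<tau> m \<beta> \<subseteq> distinct_z_locus \<tau> m \<and>
         sigma_inv ` prod_Sigma \<tau> m \<alpha> \<subseteq> prod_Sigma \<tau> m \<alpha> \<and>
         sigma_inv ` prod_Sigma \<tau> m \<beta> \<subseteq> prod_Sigma \<tau> m \<beta> \<and>
         {X \<in> prod_Sigma \<tau> m \<alpha>. sigma_inv X = X} = sym_to_hilb ` torus_hat \<tau> m \<alpha> \<and>
         {X \<in> prod_Sigma \<tau> m \<beta>. sigma_inv X = X} = sym_to_hilb ` torus_hat \<tau> m \<beta> \<and>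
         torus_hat \<tau> m \<alpha> \<subseteq> Sym_Shat \<tau> m - antidiag m \<and>
         torus_hat \<tau> m \<beta> \<subseteq> Sym_Shat \<tau> m - antidiag m"
proof -
  interpret \<alpha>: disjoint_arcs m \<alpha>
    using assms(4) by (rule crossingless_matching_imp_disjoint_arcs)
  interpret \<beta>: disjoint_arcs m \<beta>
    using assms(5) by (rule crossingless_matching_imp_disjoint_arcs)
  show ?thesis
    by (intro conjI \<alpha>.prod_Sigma_subset_distinct_z_locus \<beta>.prod_Sigma_subset_distinct_z_locus
      \<alpha>.sigma_inv_prod_Sigma_subset \<beta>.sigma_inv_prod_Sigma_subset
      \<alpha>.sigma_inv_fixed_points_prod_Sigma \<beta>.sigma_inv_fixed_points_prod_Sigma
      \<alpha>.torus_hat_subset_Sym_Shat_minus_antidiag \<beta>.torus_hat_subset_Sym_Shat_minus_antidiag)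
qed

end
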